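(* For every positive integer $N$ and every pair of indices $\boldsymbol{k}=(k_1,\dots,k_r)$, $\boldsymbol{l}=(l_1,\dots,l_r)$ of the same depth $r\ge1$, \[ \sum_{\substack{0<m_{j,1}\le\cdots\le m_{j,l_j}<N\ (j\in[r])\\ m_{j,l_j}<m_{j+1,1}\ (j\in[r-1])}}\ \prod_{j\in[r]}\frac1{(N-m_{j,1})\cdots(N-m_{j,l_j-1})\,m_{j,l_j}^{k_j}} =\sum_{\substack{0<n_{i,1}\le\cdots\le n_{i,k_i}<N\ (i\in[r])\\ n_{i,k_i}<n_{i+1,1}\ (i\in[r-1])}}\ \prod_{i\in[r]}\frac1{(N-n_{i,1})^{l_i}\,n_{i,2}\cdots n_{i,k_i}}. \]
   Context: $[n]=\{1,\dots,n\}$. An index is a tuple of positive integers. All variables $m_{j,\cdot},n_{i,\cdot}$ range over integers; empty products equal $1$ (e.g. when $l_j=1$ the product $(N-m_{j,1})\cdots(N-m_{j,l_j-1})$ is empty, and when $k_i=1$ the product $n_{i,2}\cdots n_{i,k_i}$ is empty). *)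

theory Defs
  imports Main "HOL.Real"
begin

text \<open>A configuration of summation variables for block lengths ls = (l_1,...,l_r):
  a list of r blocks, block j being the list (m_{j,1},...,m_{j,l_j}) (0-based in Isabelle),
  with 0 < m_{j,1} <= ... <= m_{j,l_j} < N and m_{j,l_j} < m_{j+1,1}.\<close>

definition admissible :: "nat \<Rightarrow> nat list \<Rightarrow> nat list list \<Rightarrow> bool" where
  "admissible N ls ms \<longleftrightarrow>
     length ms = length ls \<and>
     (\<forall>j<length ms. length (ms!j) = ls!j) \<and>
     (\<forall>j<length ms. \<forall>a<length (ms!j). 0 < ms!j!a \<and> ms!j!a < N) \<and>
     (\<forall>j<length ms. \<forall>a. a + 1 < length (ms!j) \<longrightarrow> ms!j!a \<le> ms!j!(a+1)) \<and>
     (\<forall>j. j + 1 < length ms \<longrightarrow> ms!j!(length (ms!j) - 1) < ms!(j+1)!0)"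

definition lhs_term :: "nat \<Rightarrow> nat list \<Rightarrow> nat list \<Rightarrow> nat list list \<Rightarrow> real" where
  "lhs_term N ks ls ms =
     (\<Prod>j<length ks. 1 / ((\<Prod>a<ls!j - 1. (real N - real (ms!j!a)))
                           * real (ms!j!(ls!j - 1)) ^ (ks!j)))"

definition rhs_term :: "nat \<Rightarrow> nat list \<Rightarrow> nat list \<Rightarrow> nat list list \<Rightarrow> real" where
  "rhs_term N ks ls ns =
     (\<Prod>i<length ks. 1 / ((real N - real (ns!i!0)) ^ (ls!i)
                           * (\<Prod>a\<in>{1..<ks!i}. real (ns!i!a))))"

end

theory Submission
  imports Defs
begin

(*
  The proof follows the connected-sum method.  Summing the blocks of the left-hand side one at a
  time writes it as  sum_mu (B(k_r,l_r) o ... o B(k_1,l_1)) delta_0 (mu),  where delta_0 is the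
  indicator of 0 and the block operator B(k,l) = X^k P Y^(l-1) acts on functions on {0..N-1} by
    (P f)(mu) = f 0 + ... + f (mu - 1),   (Y f)(mu) = (f 0 + ... + f mu) / (N - 1 - mu),
    (X f)(mu) = f mu / mu
  (partial_sum, scaled_partial_sum and divide_index below).  The connector
  c(mu,pi) = C(N-1-mu, pi) / C(N-1, pi) is symmetric, equals 1 at pi = 0, and for the pairing
  <f,g> = sum_{mu,pi} f mu * g pi * c(mu,pi) two telescoping binomial sums give
  <Y f, g> = <f, X g>  and  <P f, Y g> = <f, X (P g)>.  Hence <B(k,l) f, g> = <f, B(l,k) g>, and
  moving all blocks across <-, delta_0> replaces (k, l) by (rev l, rev k).  Finally the substitution
  n -> N - n, which reverses the order of the blocks and of the entries in each block, identifies
  the right-hand side with the left-hand side for (rev l, rev k).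
*)

section \<open>The connector\<close>

definition connector :: "nat \<Rightarrow> nat \<Rightarrow> nat \<Rightarrow> real" where
  "connector N \<mu> \<pi> = real ((N - 1 - \<mu>) choose \<pi>) / real ((N - 1) choose \<pi>)"

lemma connector_sym:
  assumes "\<mu> < N" "\<pi> < N"
  shows "connector N \<mu> \<pi> = connector N \<pi> \<mu>"
proof (cases "\<mu> + \<pi> < N")
  case True
  define n where "n = N - 1"
  have "(n choose \<mu>) * ((n - \<mu>) choose \<pi>) = (n choose (\<mu> + \<pi>)) * ((\<mu> + \<pi>) choose \<mu>)"
    using choose_mult[of \<mu> "\<mu> + \<pi>" n] True n_def by simp
  also have "\<dots> = (n choose \<pi>) * ((n - \<pi>) choose \<mu>)"
    using choose_mult[of \<pi> "\<mu> + \<pi>" n] True n_def binomial_symmetric[of \<mu> "\<mu> + \<pi>"] by simp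
  finally have "real (n choose \<mu>) * real ((n - \<mu>) choose \<pi>) = real (n choose \<pi>) * real ((n - \<pi>) choose \<mu>)"
    by (metis of_nat_mult)
  moreover have "n choose \<mu> > 0" "n choose \<pi> > 0"
    using assms n_def by auto
  ultimately show ?thesis
    unfolding connector_def n_def[symmetric] by (simp add: field_simps)
next
  case False
  then show ?thesis
    using assms by (simp add: connector_def binomial_eq_0)
qed

lemma connector_Suc:
  "real (N - 1 - \<mu>) * connector N (Suc \<mu>) \<pi> = (real (N - 1 - \<mu>) - real \<pi>) * connector N \<mu> \<pi>"
proof -
  define n where "n = N - 1 - \<mu>"
  have "N - 1 - Suc \<mu> = n - 1"
    by (simp add: n_def)
  moreover have "real n * real ((n - 1) choose \<pi>) = (real n - real \<pi>) * real (n choose \<pi>)"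
  proof (cases "\<pi> \<le> n")
    case True
    then show ?thesis
      using binomial_absorb_comp[of n \<pi>] by (metis of_nat_diff of_nat_mult)
  next
    case False
    then show ?thesis by (simp add: binomial_eq_0)
  qed
  ultimately show ?thesis
    unfolding connector_def n_def[symmetric] by (simp only: times_divide_eq_right)
qed

lemma connector_last: "0 < \<pi> \<Longrightarrow> connector N (N - 1) \<pi> = 0"
  by (simp add: connector_def)

lemma sum_connector_div:
  assumes "0 < \<pi>"
  shows "(\<Sum>\<mu>\<in>{\<rho>..<N - 1}. connector N \<mu> \<pi> / real (N - 1 - \<mu>)) = connector N \<rho> \<pi> / real \<pi>"
proof (cases "\<rho> < N - 1")
  case True
  have "(\<Sum>\<mu>\<in>{\<rho>..<N - 1}. connector N \<mu> \<pi> / real (N - 1 - \<mu>))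
      = (\<Sum>\<mu>\<in>{\<rho>..<N - 1}. connector N \<mu> \<pi> - connector N (Suc \<mu>) \<pi>) / real \<pi>"
    unfolding sum_divide_distrib
  proof (rule sum.cong[OF refl])
    fix \<mu> assume "\<mu> \<in> {\<rho>..<N - 1}"
    then have "real (N - 1 - \<mu>) \<noteq> 0" by auto
    with connector_Suc[of N \<mu> \<pi>] assms
    show "connector N \<mu> \<pi> / real (N - 1 - \<mu>) = (connector N \<mu> \<pi> - connector N (Suc \<mu>) \<pi>) / real \<pi>"
      by (simp add: field_simps)
  qed
  also have "\<dots> = connector N \<rho> \<pi> / real \<pi>"
    using sum_Suc_diff'[of \<rho> "N - 1" "\<lambda>\<mu>. - connector N \<mu> \<pi>"] True connector_last[OF assms, of N]
    by simp
  finally show ?thesis .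
next
  case False
  then show ?thesis using assms by (simp add: connector_def)
qed

lemma sum_connector_greater:
  assumes "\<pi> + 2 \<le> N"
  shows "(\<Sum>\<mu>\<in>{\<rho><..<N}. connector N \<mu> \<pi>)
       = connector N \<rho> (Suc \<pi>) * real (N - 1 - \<pi>) / real (Suc \<pi>)"
proof -
  have "(\<Sum>\<mu>\<in>{\<rho><..<N}. (N - 1 - \<mu>) choose \<pi>) = (\<Sum>j<N - 1 - \<rho>. j choose \<pi>)"
    by (rule sum.reindex_bij_witness[where i="\<lambda>j. N - 1 - j" and j="\<lambda>\<mu>. N - 1 - \<mu>"]) auto
  also have "\<dots> = (N - 1 - \<rho>) choose Suc \<pi>"
    by (cases "N - 1 - \<rho>") (simp_all add: lessThan_Suc_atMost sum_choose_upper)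
  finally have hockey: "(\<Sum>\<mu>\<in>{\<rho><..<N}. real ((N - 1 - \<mu>) choose \<pi>)) = real ((N - 1 - \<rho>) choose Suc \<pi>)"
    by (simp flip: of_nat_sum)
  have absorb: "real (Suc \<pi>) * real ((N - 1) choose Suc \<pi>) = real (N - 1 - \<pi>) * real ((N - 1) choose \<pi>)"
    by (simp only: of_nat_mult[symmetric] binomial_absorption binomial_absorb_comp)
  have rescale: "a / d0 = a / d1 * x / s" if "s * d1 = x * d0" "x \<noteq> 0" for a d0 d1 x s :: real
  proof -
    have "a / d1 * x / s = a * x / (s * d1)" by simp
    also have "\<dots> = a / d0" using that by simp
    finally show ?thesis ..
  qed
  have "(\<Sum>\<mu>\<in>{\<rho><..<N}. connector N \<mu> \<pi>) = real ((N - 1 - \<rho>) choose Suc \<pi>) / real ((N - 1) choose \<pi>)"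
    unfolding connector_def sum_divide_distrib[symmetric] hockey ..
  also have "\<dots> = connector N \<rho> (Suc \<pi>) * real (N - 1 - \<pi>) / real (Suc \<pi>)"
    unfolding connector_def by (rule rescale[OF absorb]) (use assms in simp)
  finally show ?thesis .
qed

section \<open>Duality of the block operators\<close>

definition partial_sum :: "(nat \<Rightarrow> real) \<Rightarrow> nat \<Rightarrow> real" where
  "partial_sum f \<mu> = (\<Sum>\<rho><\<mu>. f \<rho>)"

text \<open>At \<open>\<mu> = N - 1\<close> the division by zero gives \<open>0\<close>, so this term drops out of every
  sum over \<open>\<mu> < N\<close>.\<close>

definition scaled_partial_sum :: "nat \<Rightarrow> (nat \<Rightarrow> real) \<Rightarrow> nat \<Rightarrow> real" where
  "scaled_partial_sum N f \<mu> = partial_sum f (Suc \<mu>) / real (N - 1 - \<mu>)"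

definition divide_index :: "nat \<Rightarrow> (nat \<Rightarrow> real) \<Rightarrow> nat \<Rightarrow> real" where
  "divide_index k f \<mu> = f \<mu> / real \<mu> ^ k"

definition tail_sum :: "nat \<Rightarrow> (nat \<Rightarrow> real) \<Rightarrow> nat \<Rightarrow> real" where
  "tail_sum N h \<rho> = (\<Sum>\<mu>\<in>{\<rho><..<N}. h \<mu>)"

definition scaled_tail_sum :: "nat \<Rightarrow> (nat \<Rightarrow> real) \<Rightarrow> nat \<Rightarrow> real" where
  "scaled_tail_sum N h \<rho> = (\<Sum>\<mu>\<in>{\<rho>..<N - 1}. h \<mu> / real (N - 1 - \<mu>))"

lemma sum_swap_less:
  fixes F :: "nat \<Rightarrow> nat \<Rightarrow> 'a::comm_monoid_add"
  shows "(\<Sum>\<mu><N. \<Sum>\<rho><\<mu>. F \<rho> \<mu>) = (\<Sum>\<rho><N. \<Sum>\<mu>\<in>{\<rho><..<N}. F \<rho> \<mu>)"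
proof -
  have "(\<Sum>\<mu><N. \<Sum>\<rho><\<mu>. F \<rho> \<mu>) = (\<Sum>\<mu><N. \<Sum>\<rho>\<in>{\<rho>. \<rho> \<in> {..<N} \<and> \<rho> < \<mu>}. F \<rho> \<mu>)"
    by (intro sum.cong) auto
  also have "\<dots> = (\<Sum>\<rho><N. \<Sum>\<mu>\<in>{\<mu>. \<mu> \<in> {..<N} \<and> \<rho> < \<mu>}. F \<rho> \<mu>)"
    by (rule sum.swap_restrict) auto
  also have "\<dots> = (\<Sum>\<rho><N. \<Sum>\<mu>\<in>{\<rho><..<N}. F \<rho> \<mu>)"
    by (intro sum.cong) auto
  finally show ?thesis .
qed

lemma sum_swap_less_eq:
  fixes F :: "nat \<Rightarrow> nat \<Rightarrow> 'a::comm_monoid_add"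
  shows "(\<Sum>\<mu><N. \<Sum>\<rho>\<le>\<mu>. F \<rho> \<mu>) = (\<Sum>\<rho><N. \<Sum>\<mu>\<in>{\<rho>..<N}. F \<rho> \<mu>)"
proof -
  have "(\<Sum>\<mu><N. \<Sum>\<rho>\<le>\<mu>. F \<rho> \<mu>) = (\<Sum>\<mu><N. \<Sum>\<rho>\<in>{\<rho>. \<rho> \<in> {..<N} \<and> \<rho> \<le> \<mu>}. F \<rho> \<mu>)"
    by (intro sum.cong) auto
  also have "\<dots> = (\<Sum>\<rho><N. \<Sum>\<mu>\<in>{\<mu>. \<mu> \<in> {..<N} \<and> \<rho> \<le> \<mu>}. F \<rho> \<mu>)"
    by (rule sum.swap_restrict) auto
  also have "\<dots> = (\<Sum>\<rho><N. \<Sum>\<mu>\<in>{\<rho>..<N}. F \<rho> \<mu>)"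
    by (intro sum.cong) auto
  finally show ?thesis .
qed

lemma sum_partial_sum_mult:
  "(\<Sum>\<mu><N. partial_sum f \<mu> * h \<mu>) = (\<Sum>\<rho><N. f \<rho> * tail_sum N h \<rho>)"
  unfolding partial_sum_def tail_sum_def sum_distrib_left sum_distrib_right
  by (rule sum_swap_less)

lemma sum_scaled_partial_sum_mult:
  "(\<Sum>\<mu><N. scaled_partial_sum N f \<mu> * h \<mu>) = (\<Sum>\<rho><N. f \<rho> * scaled_tail_sum N h \<rho>)"
proof -
  have "(\<Sum>\<mu><N. scaled_partial_sum N f \<mu> * h \<mu>) = (\<Sum>\<mu><N. \<Sum>\<rho>\<le>\<mu>. f \<rho> * (h \<mu> / real (N - 1 - \<mu>)))"
    by (simp add: scaled_partial_sum_def partial_sum_def lessThan_Suc_atMost sum_distrib_right sum_divide_distrib)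
  also have "\<dots> = (\<Sum>\<rho><N. f \<rho> * (\<Sum>\<mu>\<in>{\<rho>..<N}. h \<mu> / real (N - 1 - \<mu>)))"
    by (simp add: sum_swap_less_eq sum_distrib_left)
  also have "\<dots> = (\<Sum>\<rho><N. f \<rho> * scaled_tail_sum N h \<rho>)"
  proof (rule sum.cong[OF refl])
    fix \<rho> assume "\<rho> \<in> {..<N}"
    then have "{\<rho>..<N} = insert (N - 1) {\<rho>..<N - 1}"
      by auto
    then show "f \<rho> * (\<Sum>\<mu>\<in>{\<rho>..<N}. h \<mu> / real (N - 1 - \<mu>)) = f \<rho> * scaled_tail_sum N h \<rho>"
      by (simp add: scaled_tail_sum_def)
  qed
  finally show ?thesis .
qed

definition connector_transform :: "nat \<Rightarrow> (nat \<Rightarrow> real) \<Rightarrow> nat \<Rightarrow> real" where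
  "connector_transform N f \<pi> = (\<Sum>\<mu><N. f \<mu> * connector N \<mu> \<pi>)"

lemma connector_transform_scaled_partial_sum:
  assumes "0 < \<pi>"
  shows "connector_transform N (scaled_partial_sum N f) \<pi> = connector_transform N f \<pi> / real \<pi>"
proof -
  have "scaled_tail_sum N (\<lambda>\<mu>. connector N \<mu> \<pi>) \<rho> = connector N \<rho> \<pi> / real \<pi>" for \<rho>
    unfolding scaled_tail_sum_def using sum_connector_div[OF assms] .
  then show ?thesis
    unfolding connector_transform_def sum_scaled_partial_sum_mult
    by (simp add: sum_divide_distrib)
qed

lemma connector_transform_partial_sum:
  assumes "\<pi> + 2 \<le> N"
  shows "connector_transform N (partial_sum f) \<pi>
       = connector_transform N f (Suc \<pi>) * real (N - 1 - \<pi>) / real (Suc \<pi>)"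
proof -
  have "tail_sum N (\<lambda>\<mu>. connector N \<mu> \<pi>) \<rho> = connector N \<rho> (Suc \<pi>) * real (N - 1 - \<pi>) / real (Suc \<pi>)"
    for \<rho>
    unfolding tail_sum_def using sum_connector_greater[OF assms] .
  then show ?thesis
    unfolding connector_transform_def sum_partial_sum_mult
    by (simp add: sum_divide_distrib sum_distrib_right mult.assoc)
qed

definition pairing :: "nat \<Rightarrow> (nat \<Rightarrow> real) \<Rightarrow> (nat \<Rightarrow> real) \<Rightarrow> real" where
  "pairing N f g = (\<Sum>\<pi><N. connector_transform N f \<pi> * g \<pi>)"

lemma pairing_sym: "pairing N f g = pairing N g f"
proof -
  have "pairing N f g = (\<Sum>\<pi><N. \<Sum>\<mu><N. f \<mu> * g \<pi> * connector N \<mu> \<pi>)"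
    by (simp add: pairing_def connector_transform_def sum_distrib_left sum_distrib_right ac_simps)
  also have "\<dots> = (\<Sum>\<mu><N. \<Sum>\<pi><N. g \<pi> * f \<mu> * connector N \<pi> \<mu>)"
    by (subst sum.swap) (auto intro!: sum.cong simp: connector_sym)
  also have "\<dots> = pairing N g f"
    by (simp add: pairing_def connector_transform_def sum_distrib_left sum_distrib_right ac_simps)
  finally show ?thesis .
qed

lemma pairing_delta_0:
  assumes "0 < N"
  shows "pairing N f (\<lambda>\<pi>. of_bool (\<pi> = 0)) = (\<Sum>\<mu><N. f \<mu>)"
  using assms by (simp add: pairing_def connector_transform_def connector_def)

lemma divide_index_add: "divide_index (k + j) f = divide_index k (divide_index j f)"
  by (simp add: divide_index_def fun_eq_iff power_add field_simps)

lemma pairing_scaled_partial_sum: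
  assumes "g 0 = 0"
  shows "pairing N (scaled_partial_sum N f) g = pairing N f (divide_index 1 g)"
  unfolding pairing_def
proof (rule sum.cong[OF refl])
  fix \<pi>
  show "connector_transform N (scaled_partial_sum N f) \<pi> * g \<pi>
      = connector_transform N f \<pi> * divide_index 1 g \<pi>"
    using assms connector_transform_scaled_partial_sum[of \<pi> N f]
    by (cases "\<pi> = 0") (simp_all add: divide_index_def)
qed

lemma pairing_divide_index:
  assumes "f 0 = 0"
  shows "pairing N (divide_index 1 f) g = pairing N f (scaled_partial_sum N g)"
  using pairing_scaled_partial_sum[of f N g] assms pairing_sym by metis

lemma pairing_partial_sum_scaled_partial_sum:
  "pairing N (partial_sum f) (scaled_partial_sum N g) = pairing N f (divide_index 1 (partial_sum g))"
proof (cases N)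
  case 0
  then show ?thesis by (simp add: pairing_def)
next
  case (Suc M)
  have "pairing N (partial_sum f) (scaled_partial_sum N g)
      = (\<Sum>\<pi><M. connector_transform N (partial_sum f) \<pi> * scaled_partial_sum N g \<pi>)"
    by (simp add: pairing_def Suc scaled_partial_sum_def)
  also have "\<dots> = (\<Sum>\<pi><M. connector_transform N f (Suc \<pi>) * divide_index 1 (partial_sum g) (Suc \<pi>))"
  proof (rule sum.cong[OF refl])
    fix \<pi> assume "\<pi> \<in> {..<M}"
    then have "\<pi> + 2 \<le> N" "real (N - 1 - \<pi>) \<noteq> 0"
      using Suc by auto
    then show "connector_transform N (partial_sum f) \<pi> * scaled_partial_sum N g \<pi>
        = connector_transform N f (Suc \<pi>) * divide_index 1 (partial_sum g) (Suc \<pi>)"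
      by (simp add: connector_transform_partial_sum scaled_partial_sum_def divide_index_def)
  qed
  also have "\<dots> = pairing N f (divide_index 1 (partial_sum g))"
    unfolding pairing_def Suc sum.lessThan_Suc_shift by (simp add: divide_index_def)
  finally show ?thesis .
qed

lemma pairing_divide_index_pow:
  assumes "h 0 = 0"
  shows "pairing N (divide_index k h) g = pairing N h ((scaled_partial_sum N ^^ k) g)"
proof (induction k arbitrary: g)
  case 0
  then show ?case by (simp add: divide_index_def)
next
  case (Suc k)
  have "divide_index (Suc k) h = divide_index 1 (divide_index k h)"
    using divide_index_add[of 1 k h] by simp
  then have "pairing N (divide_index (Suc k) h) g = pairing N (divide_index k h) (scaled_partial_sum N g)"
    using pairing_divide_index[of "divide_index k h" N g] assms by (simp add: divide_index_def)
  also have "\<dots> = pairing N h ((scaled_partial_sum N ^^ k) (scaled_partial_sum N g))"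
    using Suc by blast
  finally show ?case by (simp add: funpow_Suc_right del: funpow.simps)
qed

lemma pairing_scaled_partial_sum_pow:
  assumes "g 0 = 0"
  shows "pairing N ((scaled_partial_sum N ^^ j) h) g = pairing N h (divide_index j g)"
proof (induction j arbitrary: h)
  case 0
  then show ?case by (simp add: divide_index_def)
next
  case (Suc j)
  have "pairing N ((scaled_partial_sum N ^^ Suc j) h) g = pairing N ((scaled_partial_sum N ^^ j) (scaled_partial_sum N h)) g"
    by (simp add: funpow_Suc_right del: funpow.simps)
  also have "\<dots> = pairing N (scaled_partial_sum N h) (divide_index j g)"
    by (rule Suc.IH)
  also have "\<dots> = pairing N h (divide_index 1 (divide_index j g))"
    using assms by (simp add: pairing_scaled_partial_sum divide_index_def)
  also have "\<dots> = pairing N h (divide_index (Suc j) g)"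
    using divide_index_add[of 1 j g] by simp
  finally show ?case .
qed

definition block_op :: "nat \<Rightarrow> nat \<Rightarrow> nat \<Rightarrow> (nat \<Rightarrow> real) \<Rightarrow> nat \<Rightarrow> real" where
  "block_op N k l f = divide_index k (partial_sum ((scaled_partial_sum N ^^ (l - 1)) f))"

lemma pairing_block_op:
  assumes "0 < k" "0 < l"
  shows "pairing N (block_op N k l f) g = pairing N f (block_op N l k g)"
proof -
  have "pairing N (block_op N k l f) g
      = pairing N (partial_sum ((scaled_partial_sum N ^^ (l - 1)) f)) ((scaled_partial_sum N ^^ k) g)"
    unfolding block_op_def by (rule pairing_divide_index_pow) (simp add: partial_sum_def)
  also have "(scaled_partial_sum N ^^ k) g = scaled_partial_sum N ((scaled_partial_sum N ^^ (k - 1)) g)"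
    using assms(1) by (metis Suc_pred' funpow.simps(2) o_apply)
  also have "pairing N (partial_sum ((scaled_partial_sum N ^^ (l - 1)) f)) \<dots>
      = pairing N ((scaled_partial_sum N ^^ (l - 1)) f) (divide_index 1 (partial_sum ((scaled_partial_sum N ^^ (k - 1)) g)))"
    by (rule pairing_partial_sum_scaled_partial_sum)
  also have "\<dots> = pairing N f (divide_index (l - 1) (divide_index 1 (partial_sum ((scaled_partial_sum N ^^ (k - 1)) g))))"
    by (rule pairing_scaled_partial_sum_pow) (simp add: divide_index_def)
  also have "\<dots> = pairing N f (block_op N l k g)"
    using assms(2) by (simp add: block_op_def flip: divide_index_add)
  finally show ?thesis .
qed

fun block_ops :: "nat \<Rightarrow> nat list \<Rightarrow> nat list \<Rightarrow> (nat \<Rightarrow> real) \<Rightarrow> nat \<Rightarrow> real" where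
  "block_ops N (k # ks) (l # ls) f = block_ops N ks ls (block_op N k l f)"
| "block_ops N _ _ f = f"

lemma block_ops_snoc:
  "length ks = length ls \<Longrightarrow> block_ops N (ks @ [k]) (ls @ [l]) f = block_op N k l (block_ops N ks ls f)"
  by (induction ks ls arbitrary: f rule: list_induct2) auto

lemma pairing_block_ops:
  assumes "length ks = length ls" "\<forall>k\<in>set ks. 0 < k" "\<forall>l\<in>set ls. 0 < l"
  shows "pairing N (block_ops N ks ls f) g = pairing N f (block_ops N (rev ls) (rev ks) g)"
  using assms
proof (induction ks ls arbitrary: f g rule: list_induct2)
  case Nil
  then show ?case by simp
next
  case (Cons k ks l ls)
  have "pairing N (block_ops N (k # ks) (l # ls) f) g = pairing N (block_op N k l f) (block_ops N (rev ls) (rev ks) g)"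
    using Cons by simp
  also have "\<dots> = pairing N f (block_op N l k (block_ops N (rev ls) (rev ks) g))"
    using Cons.prems by (simp add: pairing_block_op)
  also have "\<dots> = pairing N f (block_ops N (rev (l # ls)) (rev (k # ks)) g)"
    using Cons.hyps by (simp add: block_ops_snoc)
  finally show ?case .
qed

lemma sum_block_ops_reverse:
  assumes "0 < N" "length ks = length ls" "\<forall>k\<in>set ks. 0 < k" "\<forall>l\<in>set ls. 0 < l"
  shows "(\<Sum>\<mu><N. block_ops N ks ls (\<lambda>\<mu>. of_bool (\<mu> = 0)) \<mu>)
       = (\<Sum>\<mu><N. block_ops N (rev ls) (rev ks) (\<lambda>\<mu>. of_bool (\<mu> = 0)) \<mu>)"
  using pairing_block_ops[OF assms(2-4), of N "\<lambda>\<mu>. of_bool (\<mu> = 0)" "\<lambda>\<mu>. of_bool (\<mu> = 0)"]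
    pairing_delta_0[OF assms(1)] pairing_sym
  by metis

section \<open>Block sums as block operators\<close>

lemma sum_scaled_partial_sum_pow_mult:
  "(\<Sum>\<mu><N. (scaled_partial_sum N ^^ j) f \<mu> * h \<mu>) = (\<Sum>\<rho><N. f \<rho> * (scaled_tail_sum N ^^ j) h \<rho>)"
proof (induction j arbitrary: h)
  case 0
  then show ?case by simp
next
  case (Suc j)
  have "(\<Sum>\<mu><N. (scaled_partial_sum N ^^ Suc j) f \<mu> * h \<mu>)
      = (\<Sum>\<mu><N. (scaled_partial_sum N ^^ j) f \<mu> * scaled_tail_sum N h \<mu>)"
    by (simp add: sum_scaled_partial_sum_mult)
  also have "\<dots> = (\<Sum>\<rho><N. f \<rho> * (scaled_tail_sum N ^^ j) (scaled_tail_sum N h) \<rho>)"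
    by (rule Suc.IH)
  finally show ?case by (simp add: funpow_Suc_right del: funpow.simps)
qed

lemma sum_block_op_mult:
  "(\<Sum>\<mu><N. block_op N k l f \<mu> * g \<mu>)
     = (\<Sum>\<rho><N. f \<rho> * (scaled_tail_sum N ^^ (l - 1)) (tail_sum N (divide_index k g)) \<rho>)"
proof -
  have "(\<Sum>\<mu><N. block_op N k l f \<mu> * g \<mu>)
      = (\<Sum>\<mu><N. partial_sum ((scaled_partial_sum N ^^ (l - 1)) f) \<mu> * divide_index k g \<mu>)"
    by (simp add: block_op_def divide_index_def)
  then show ?thesis
    by (simp add: sum_partial_sum_mult sum_scaled_partial_sum_pow_mult)
qed

definition sorted_tuples :: "nat \<Rightarrow> nat \<Rightarrow> nat \<Rightarrow> nat list set" where
  "sorted_tuples N lo l = {b. length b = l \<and> sorted b \<and> (\<forall>x\<in>set b. lo < x \<and> x < N)}"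

definition block_weight :: "nat \<Rightarrow> nat \<Rightarrow> nat list \<Rightarrow> real" where
  "block_weight N k b = 1 / ((\<Prod>a<length b - 1. (real N - real (b ! a))) * real (b ! (length b - 1)) ^ k)"

lemma finite_sorted_tuples: "finite (sorted_tuples N lo l)"
proof (rule finite_subset)
  show "sorted_tuples N lo l \<subseteq> {b. set b \<subseteq> {..<N} \<and> length b = l}"
    unfolding sorted_tuples_def by auto
qed (rule finite_lists_length_eq, simp)

lemma sorted_tuples_1: "sorted_tuples N lo 1 = (\<lambda>m. [m]) ` {lo<..<N}"
  unfolding sorted_tuples_def by (auto simp: length_Suc_conv)

lemma sorted_tuples_Suc:
  "sorted_tuples N lo (Suc (Suc j)) = (\<lambda>(m, b). m # b) ` (SIGMA m:{lo<..<N}. sorted_tuples N (m - 1) (Suc j))"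
  unfolding sorted_tuples_def by (fastforce simp: length_Suc_conv image_iff)

lemma block_weight_Cons:
  assumes "b \<noteq> []"
  shows "block_weight N k (m # b) = block_weight N k b / (real N - real m)"
proof -
  obtain n where n: "length b = Suc n"
    using assms by (cases b) auto
  then have "(\<Prod>a<length (m # b) - 1. real N - real ((m # b) ! a))
      = (real N - real m) * (\<Prod>a<length b - 1. real N - real (b ! a))"
    by (simp only: length_Cons diff_Suc_1 prod.lessThan_Suc_shift) simp
  with n show ?thesis
    unfolding block_weight_def by simp
qed

lemma sum_sorted_tuples_block_weight:
  "(\<Sum>b\<in>sorted_tuples N lo (Suc j). block_weight N k b * g (last b))
     = (scaled_tail_sum N ^^ j) (tail_sum N (divide_index k g)) lo"
proof (induction j arbitrary: lo)
  case 0
  have "(\<Sum>b\<in>sorted_tuples N lo 1. block_weight N k b * g (last b)) = (\<Sum>m\<in>{lo<..<N}. block_weight N k [m] * g m)"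
    unfolding sorted_tuples_1 by (subst sum.reindex) (auto simp: inj_on_def)
  then show ?case
    by (simp add: block_weight_def tail_sum_def divide_index_def)
next
  case (Suc j)
  have "(\<Sum>b\<in>sorted_tuples N lo (Suc (Suc j)). block_weight N k b * g (last b))
      = (\<Sum>m\<in>{lo<..<N}. \<Sum>b\<in>sorted_tuples N (m - 1) (Suc j). block_weight N k (m # b) * g (last (m # b)))"
    unfolding sorted_tuples_Suc
    by (subst sum.reindex) (auto simp: inj_on_def case_prod_beta sum.Sigma finite_sorted_tuples)
  also have "\<dots> = (\<Sum>m\<in>{lo<..<N}.
      (\<Sum>b\<in>sorted_tuples N (m - 1) (Suc j). block_weight N k b * g (last b)) / (real N - real m))"
    unfolding sum_divide_distrib
    by (intro sum.cong refl) (auto simp: sorted_tuples_def block_weight_Cons)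
  also have "\<dots> = (\<Sum>\<mu>\<in>{lo..<N - 1}.
      (scaled_tail_sum N ^^ j) (tail_sum N (divide_index k g)) \<mu> / real (N - 1 - \<mu>))"
    unfolding Suc.IH
    by (rule sum.reindex_bij_witness[where i=Suc and j="\<lambda>m. m - 1"]) (auto simp: of_nat_diff)
  also have "\<dots> = scaled_tail_sum N ((scaled_tail_sum N ^^ j) (tail_sum N (divide_index k g))) lo"
    by (rule scaled_tail_sum_def[symmetric])
  finally show ?case
    by (simp only: funpow.simps comp_apply)
qed

lemma sum_block_op_mult_sorted_tuples:
  assumes "0 < l"
  shows "(\<Sum>\<mu><N. block_op N k l f \<mu> * g \<mu>)
       = (\<Sum>\<rho><N. f \<rho> * (\<Sum>b\<in>sorted_tuples N \<rho> l. block_weight N k b * g (last b)))"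
  using assms sum_sorted_tuples_block_weight[where j="l - 1"] by (simp add: sum_block_op_mult)

lemma sorted_tuples_iff_hd:
  assumes "0 < l"
  shows "b \<in> sorted_tuples N lo l \<longleftrightarrow> b \<in> sorted_tuples N 0 l \<and> lo < hd b"
proof (cases b)
  case Nil
  then show ?thesis using assms by (simp add: sorted_tuples_def)
next
  case (Cons x xs)
  then show ?thesis by (auto simp: sorted_tuples_def)
qed

lemma admissible_iff:
  assumes "\<forall>l\<in>set ls. 0 < l"
  shows "admissible N ls ms \<longleftrightarrow>
           list_all2 (\<lambda>b l. b \<in> sorted_tuples N 0 l) ms ls \<and> successively (\<lambda>b c. last b < hd c) ms"
proof -
  have nonempty: "ms ! j \<noteq> []" if "length ms = length ls" "j < length ms" "length (ms ! j) = ls ! j" for j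
    using that assms nth_mem by fastforce
  show ?thesis
    unfolding admissible_def list_all2_conv_all_nth successively_conv_nth sorted_tuples_def
      sorted_iff_nth_Suc all_set_conv_all_nth
    by (auto simp: last_conv_nth hd_conv_nth nonempty)
qed

definition last_index :: "nat list list \<Rightarrow> nat" where
  "last_index ms = (if ms = [] then 0 else last (last ms))"

lemma admissible_snoc_iff:
  assumes "\<forall>l\<in>set ls. 0 < l" "0 < l"
  shows "admissible N (ls @ [l]) (ms @ [b]) \<longleftrightarrow> admissible N ls ms \<and> b \<in> sorted_tuples N (last_index ms) l"
proof (cases "length ms = length ls")
  case True
  then show ?thesis
    using assms sorted_tuples_iff_hd[OF assms(2), where N=N and lo="last (last ms)" and b=b]
    by (auto simp: admissible_iff list_all2_append successively_append_iff last_index_def)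
next
  case False
  then show ?thesis by (simp add: admissible_def)
qed

lemma admissible_snoc_eq:
  assumes "\<forall>l\<in>set ls. 0 < l" "0 < l"
  shows "{ms. admissible N (ls @ [l]) ms}
       = (\<lambda>(ms, b). ms @ [b]) ` (SIGMA ms:{ms. admissible N ls ms}. sorted_tuples N (last_index ms) l)"
proof -
  have "ms \<noteq> []" if "admissible N (ls @ [l]) ms" for ms
    using that by (auto simp: admissible_def)
  then show ?thesis
    using admissible_snoc_iff[OF assms]
    by (auto simp: image_iff) (metis append_butlast_last_id)
qed

lemma finite_admissible: "finite {ms. admissible N ls ms}"
proof (rule finite_subset)
  show "{ms. admissible N ls ms}
      \<subseteq> {ms. set ms \<subseteq> {b. set b \<subseteq> {..<N} \<and> length b \<le> sum_list ls} \<and> length ms = length ls}"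
    by (auto simp: admissible_def in_set_conv_nth elem_le_sum_list)
qed (intro finite_lists_length_eq finite_lists_length_le; simp)

lemma lhs_term_eq_prod_block_weight:
  assumes "length ks = length ls" "list_all2 (\<lambda>b l. length b = l) ms ls"
  shows "lhs_term N ks ls ms = (\<Prod>j<length ks. block_weight N (ks ! j) (ms ! j))"
  unfolding lhs_term_def block_weight_def
  using assms by (intro prod.cong) (auto simp: list_all2_conv_all_nth)

lemma lhs_term_snoc:
  assumes "length ks = length ls" "list_all2 (\<lambda>b l. length b = l) ms ls" "length b = l"
  shows "lhs_term N (ks @ [k]) (ls @ [l]) (ms @ [b]) = lhs_term N ks ls ms * block_weight N k b"
proof -
  have "length ms = length ks"
    using assms by (simp add: list_all2_lengthD)
  then show ?thesis
    using assms
    by (simp add: lhs_term_eq_prod_block_weight list_all2_appendI nth_append)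
qed

lemma sum_lhs_term_mult:
  assumes "0 < N" "length ks = length ls" "\<forall>l\<in>set ls. 0 < l"
  shows "(\<Sum>ms | admissible N ls ms. lhs_term N ks ls ms * g (last_index ms))
       = (\<Sum>\<mu><N. block_ops N ks ls (\<lambda>\<mu>. of_bool (\<mu> = 0)) \<mu> * g \<mu>)"
  using assms(2,3)
proof (induction ks arbitrary: ls g rule: rev_induct)
  case Nil
  then have "{ms. admissible N ls ms} = {[]}"
    by (auto simp: admissible_def)
  with Nil assms(1) show ?case
    by (simp add: lhs_term_def last_index_def lessThan_atLeast0 atLeast0_lessThan_Suc sum.atLeast_Suc_lessThan)
next
  case (snoc k ks)
  obtain ls' l where ls: "ls = ls' @ [l]"
    using snoc.prems(1) by (cases ls rule: rev_cases) auto
  have len: "length ks = length ls'" and pos: "\<forall>l\<in>set ls'. 0 < l" "0 < l"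
    using snoc.prems ls by auto
  define G where "G \<rho> = (\<Sum>b\<in>sorted_tuples N \<rho> l. block_weight N k b * g (last b))" for \<rho>
  have "(\<Sum>ms | admissible N ls ms. lhs_term N (ks @ [k]) ls ms * g (last_index ms))
      = (\<Sum>ms' | admissible N ls' ms'. \<Sum>b\<in>sorted_tuples N (last_index ms') l.
           lhs_term N (ks @ [k]) ls (ms' @ [b]) * g (last_index (ms' @ [b])))"
    unfolding ls admissible_snoc_eq[OF pos]
    by (subst sum.reindex) (auto simp: inj_on_def case_prod_beta sum.Sigma finite_admissible finite_sorted_tuples)
  also have "\<dots> = (\<Sum>ms' | admissible N ls' ms'. lhs_term N ks ls' ms' * G (last_index ms'))"
  proof (rule sum.cong[OF refl])
    fix ms' assume "ms' \<in> {ms'. admissible N ls' ms'}"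
    then have "list_all2 (\<lambda>b l. length b = l) ms' ls'"
      using pos by (auto simp: admissible_iff sorted_tuples_def elim: list_all2_mono)
    then show "(\<Sum>b\<in>sorted_tuples N (last_index ms') l. lhs_term N (ks @ [k]) ls (ms' @ [b]) * g (last_index (ms' @ [b])))
        = lhs_term N ks ls' ms' * G (last_index ms')"
      unfolding G_def sum_distrib_left
      by (intro sum.cong refl) (auto simp: ls len lhs_term_snoc sorted_tuples_def last_index_def)
  qed
  also have "\<dots> = (\<Sum>\<mu><N. block_ops N ks ls' (\<lambda>\<mu>. of_bool (\<mu> = 0)) \<mu> * G \<mu>)"
    using snoc.IH len pos by blast
  also have "\<dots> = (\<Sum>\<mu><N. block_ops N (ks @ [k]) ls (\<lambda>\<mu>. of_bool (\<mu> = 0)) \<mu> * g \<mu>)"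
    unfolding ls G_def using pos len by (simp add: sum_block_op_mult_sorted_tuples block_ops_snoc)
  finally show ?case .
qed

section \<open>Reflection\<close>

definition reflect :: "nat \<Rightarrow> nat list list \<Rightarrow> nat list list" where
  "reflect N ms = rev (map (\<lambda>b. rev (map (\<lambda>x. N - x) b)) ms)"

lemma reflect_reflect:
  assumes "\<forall>b\<in>set ms. \<forall>x\<in>set b. x \<le> N"
  shows "reflect N (reflect N ms) = ms"
  using assms unfolding reflect_def by (simp add: rev_map comp_def map_idI)

lemma sorted_tuples_reflect:
  assumes "b \<in> sorted_tuples N 0 l"
  shows "rev (map (\<lambda>x. N - x) b) \<in> sorted_tuples N 0 l"
proof -
  have "sorted_wrt (\<lambda>x y. y \<le> x) (map (\<lambda>x. N - x) b)"
    using assms unfolding sorted_tuples_def sorted_wrt_map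
    by (auto elim: sorted_wrt_mono_rel[rotated])
  then show ?thesis
    using assms by (auto simp: sorted_tuples_def sorted_wrt_rev)
qed

lemma admissible_reflect:
  assumes "\<forall>k\<in>set ks. 0 < k" "admissible N ks ns"
  shows "admissible N (rev ks) (reflect N ns)"
proof -
  have blocks: "list_all2 (\<lambda>b l. b \<in> sorted_tuples N 0 l) ns ks"
    and sep: "successively (\<lambda>b c. last b < hd c) ns"
    using assms by (simp_all add: admissible_iff)
  have block_ne: "b \<noteq> [] \<and> (\<forall>x\<in>set b. x < N)" if "b \<in> set ns" for b
    using blocks that assms(1)
    by (fastforce simp: list_all2_conv_all_nth in_set_conv_nth sorted_tuples_def)
  have "list_all2 (\<lambda>b l. b \<in> sorted_tuples N 0 l) (reflect N ns) (rev ks)"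
    using blocks unfolding reflect_def list_all2_rev list_all2_map1
    by (rule list_all2_mono) (rule sorted_tuples_reflect)
  moreover have "successively (\<lambda>b c. last b < hd c) (reflect N ns)"
    unfolding reflect_def successively_rev successively_map
  proof (rule successively_mono[OF sep])
    fix b c assume "b \<in> set ns" "c \<in> set ns" "last b < hd c"
    with block_ne[of b] block_ne[of c] show "last (rev (map (\<lambda>x. N - x) c)) < hd (rev (map (\<lambda>x. N - x) b))"
      by (simp add: last_rev hd_rev last_map hd_map diff_less_mono2)
  qed
  ultimately show ?thesis
    using assms(1) by (simp add: admissible_iff)
qed

lemma block_weight_reflect:
  assumes "b \<noteq> []" "\<forall>x\<in>set b. x \<le> N"
  shows "block_weight N l (rev (map (\<lambda>x. N - x) b))
       = 1 / ((real N - real (b ! 0)) ^ l * (\<Prod>a\<in>{1..<length b}. real (b ! a)))"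
proof -
  define n where "n = length b - 1"
  have n: "length b = Suc n"
    using assms(1) by (simp add: n_def)
  have le: "b ! a \<le> N" if "a < length b" for a
    using assms(2) that by simp
  have "(\<Prod>a<n. real N - real (rev (map (\<lambda>x. N - x) b) ! a)) = (\<Prod>a<n. real (b ! (n - a)))"
    using le by (intro prod.cong) (auto simp: n rev_nth of_nat_diff)
  also have "\<dots> = (\<Prod>a\<in>{1..<length b}. real (b ! a))"
    by (rule prod.reindex_bij_witness[where i="\<lambda>a. n - a" and j="\<lambda>a. n - a"]) (auto simp: n)
  finally show ?thesis
    using le[of 0] unfolding block_weight_def by (simp add: n rev_nth of_nat_diff mult.commute)
qed

lemma rhs_term_eq_lhs_term_reflect:
  assumes "\<forall>k\<in>set ks. 0 < k" "length ks = length ls" "admissible N ks ns"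
  shows "rhs_term N ks ls ns = lhs_term N (rev ls) (rev ks) (reflect N ns)"
proof -
  define r where "r = length ks"
  have blocks: "list_all2 (\<lambda>b l. b \<in> sorted_tuples N 0 l) ns ks"
    using assms by (simp add: admissible_iff)
  then have ns: "length ns = r" "ns ! i \<in> sorted_tuples N 0 (ks ! i)" if "i < r" for i
    using that by (auto simp: r_def list_all2_conv_all_nth)
  have "list_all2 (\<lambda>b l. b \<in> sorted_tuples N 0 l) (reflect N ns) (rev ks)"
    using admissible_reflect[OF assms(1,3)] assms(1) by (simp add: admissible_iff)
  then have "lhs_term N (rev ls) (rev ks) (reflect N ns)
      = (\<Prod>j<r. block_weight N (rev ls ! j) (reflect N ns ! j))"
    using assms(2) r_def
    by (subst lhs_term_eq_prod_block_weight) (auto simp: sorted_tuples_def elim: list_all2_mono)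
  also have "\<dots> = (\<Prod>i<r. block_weight N (rev ls ! (r - Suc i)) (reflect N ns ! (r - Suc i)))"
    by (rule prod.nat_diff_reindex[symmetric])
  also have "\<dots> = (\<Prod>i<r. block_weight N (ls ! i) (rev (map (\<lambda>x. N - x) (ns ! i))))"
    using ns assms(2) r_def by (intro prod.cong) (auto simp: rev_nth reflect_def)
  also have "\<dots> = rhs_term N ks ls ns"
    unfolding rhs_term_def r_def[symmetric]
  proof (rule prod.cong[OF refl])
    fix i assume "i \<in> {..<r}"
    then have "ks ! i \<in> set ks"
      by (simp add: r_def)
    with assms(1) have "0 < ks ! i"
      by blast
    with ns[of i] \<open>i \<in> {..<r}\<close> have "ns ! i \<noteq> []" "\<forall>x\<in>set (ns ! i). x \<le> N" "length (ns ! i) = ks ! i"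
      by (auto simp: sorted_tuples_def)
    then show "block_weight N (ls ! i) (rev (map (\<lambda>x. N - x) (ns ! i)))
        = 1 / ((real N - real (ns ! i ! 0)) ^ ls ! i * (\<Prod>a\<in>{1..<ks ! i}. real (ns ! i ! a)))"
      by (simp add: block_weight_reflect)
  qed
  finally show ?thesis ..
qed

lemma sum_rhs_term_eq_sum_lhs_term:
  assumes "\<forall>k\<in>set ks. 0 < k" "length ks = length ls"
  shows "(\<Sum>ns | admissible N ks ns. rhs_term N ks ls ns)
       = (\<Sum>ms | admissible N (rev ks) ms. lhs_term N (rev ls) (rev ks) ms)"
proof -
  have bounded: "\<forall>b\<in>set ms. \<forall>x\<in>set b. x \<le> N" if "admissible N ks' ms" for ks' ms
    using that by (fastforce simp: admissible_def in_set_conv_nth)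
  have pos: "\<forall>k\<in>set (rev ks). 0 < k"
    using assms(1) by simp
  show ?thesis
    by (rule sum.reindex_bij_witness[where i="reflect N" and j="reflect N"])
      (use assms pos admissible_reflect[OF pos] in
        \<open>auto simp: reflect_reflect bounded admissible_reflect rhs_term_eq_lhs_term_reflect\<close>)
qed

theorem mainTheorem12:
  fixes N :: nat and ks ls :: "nat list"
  assumes "0 < N"
    and "length ks = length ls" and "1 \<le> length ks"
    and "\<forall>x\<in>set ks. 0 < x" and "\<forall>x\<in>set ls. 0 < x"
  shows "(\<Sum>ms\<in>{ms. admissible N ls ms}. lhs_term N ks ls ms)
       = (\<Sum>ns\<in>{ns. admissible N ks ns}. rhs_term N ks ls ns)"
proof -
  let ?\<delta> = "\<lambda>\<mu>. of_bool (\<mu> = 0) :: real"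
  have "(\<Sum>ms | admissible N ls ms. lhs_term N ks ls ms) = (\<Sum>\<mu><N. block_ops N ks ls ?\<delta> \<mu>)"
    using sum_lhs_term_mult[OF assms(1,2,5), where g="\<lambda>_. 1"] by simp
  also have "\<dots> = (\<Sum>\<mu><N. block_ops N (rev ls) (rev ks) ?\<delta> \<mu>)"
    using sum_block_ops_reverse assms by blast
  also have "\<dots> = (\<Sum>ms | admissible N (rev ks) ms. lhs_term N (rev ls) (rev ks) ms)"
    using sum_lhs_term_mult[of N "rev ls" "rev ks" "\<lambda>_. 1"] assms by simp
  also have "\<dots> = (\<Sum>ns | admissible N ks ns. rhs_term N ks ls ns)"
    using sum_rhs_term_eq_sum_lhs_term assms by simp
  finally show ?thesis .
qed

end
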